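(* Let $X$ be a real Hilbert space, let $A$ be a nonempty closed convex subset of $X$ and $B$ a closed affine subspace of $X$ (with $A\cap B$ possibly empty). Let $g:=P_{\overline{B-A}}\,0$ and assume $g\in B-A$, so that $E:=A\cap(B-g)$ and $F:=(A+g)\cap B$ are nonempty. Let $T:=\mathrm{Id}-P_A+P_BR_A$ and let $x\in X$. Then: (i) $(P_AT^nx)_{n\in\mathbb{N}}$ converges weakly to some point in $E$; (ii) $(P_BT^nx)_{n\in\mathbb{N}}$ converges weakly to some point in $F$.
   Context: For a nonempty closed convex set $C\subseteq X$, $P_C$ denotes the metric projection onto $C$ and $R_C:=2P_C-\mathrm{Id}$. $T$ is the Douglas–Rachford operator for the ordered pair $(A,B)$. $g$ is the element of minimal norm in the closure of $B-A=\{b-a:a\in A,b\in B\}$. *)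

theory Defs
  imports "HOL-Analysis.Analysis"
begin

text \<open>Metric projection onto a set C (in a real Hilbert space): the unique nearest point.
  For nonempty closed convex C in a Hilbert space it exists and is unique.\<close>
definition proj :: "'a::{real_inner,complete_space} set \<Rightarrow> 'a \<Rightarrow> 'a" where
  "proj C x = (THE p. p \<in> C \<and> (\<forall>y\<in>C. norm (x - p) \<le> norm (x - y)))"

definition refl :: "'a::{real_inner,complete_space} set \<Rightarrow> 'a \<Rightarrow> 'a" where
  "refl C x = 2 *\<^sub>R proj C x - x"

definition DR :: "'a::{real_inner,complete_space} set \<Rightarrow> 'a set \<Rightarrow> 'a \<Rightarrow> 'a" where
  "DR A B x = x - proj A x + proj B (refl A x)"

definition weakly_conv :: "(nat \<Rightarrow> 'a::real_inner) \<Rightarrow> 'a \<Rightarrow> bool" where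
  "weakly_conv s y \<longleftrightarrow> (\<forall>z. (\<lambda>n. inner (s n) z) \<longlonglongrightarrow> inner y z)"

end

theory Submission
  imports Defs "HOL-Library.Diagonal_Subsequence"
begin

(*
  Write T^n x = s_n + n g.  Each point e + t g with e in E = A \<inter> (B - g) and t \<ge> 0 is moved
  by T exactly one step along g, so firm nonexpansiveness of T makes (s_n) Fejer monotone with
  respect to E, and s_n - s_(n+1) \<rightarrow> 0.  As B is affine and g \<perp> B - B,
  P_B T^(n+1) x = P_B P_A T^n x = P_B s_(n+1), and the residual P_A T^n x + g - P_B T^(n+1) x
  is dominated by s_n - s_(n+1).  Hence b_n = P_B T^(n+1) x - g is bounded, its weak cluster
  points lie in E, and <b_n, u - v> converges for u, v in E because <s_n, u - v> does.
  Opial's argument makes b_n converge weakly to some e in E, so P_A T^n x \<rightharpoonup> e and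
  P_B T^n x \<rightharpoonup> e + g.
*)

lemma minimizing_sequence_Cauchy:
  fixes C :: "'a::real_inner set"
  assumes "convex C" and cC: "\<And>n. c n \<in> C" and d: "\<And>y. y \<in> C \<Longrightarrow> d \<le> norm (x - y)^2"
    and cn: "\<And>n. norm (x - c n)^2 < d + 1 / Suc n"
  shows "Cauchy c"
proof (rule metric_CauchyI)
  have close: "norm (c m - c n)^2 \<le> 2 / Suc m + 2 / Suc n" for m n
  proof -
    have "(1/2) *\<^sub>R (c m + c n) \<in> C"
      using convexD[OF assms(1) cC cC, of "1/2" "1/2"] by (simp add: scaleR_right_distrib)
    then have "d \<le> norm (x - (1/2) *\<^sub>R (c m + c n))^2" by (rule d)
    moreover have "norm (c m - c n)^2 = 2 * norm (x - c m)^2 + 2 * norm (x - c n)^2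
        - 4 * norm (x - (1/2) *\<^sub>R (c m + c n))^2"
      unfolding power2_norm_eq_inner
      by (simp add: inner_diff_left inner_diff_right inner_add_left inner_add_right inner_commute algebra_simps)
    ultimately show ?thesis using cn[of m] cn[of n] by simp
  qed
  fix e :: real assume "e > 0"
  obtain N :: nat where N: "4 / e^2 < N" using reals_Archimedean2 by blast
  have N_pos: "0 < real N" using N \<open>e > 0\<close> by (smt (verit) divide_pos_pos zero_less_power)
  show "\<exists>M. \<forall>m\<ge>M. \<forall>n\<ge>M. dist (c m) (c n) < e"
  proof (intro exI allI impI)
    fix m n assume "N \<le> m" "N \<le> n"
    then have "2 / Suc m \<le> 2 / N" "2 / Suc n \<le> 2 / N"
      using N_pos by (auto intro!: divide_left_mono)
    then have "norm (c m - c n)^2 \<le> 4 / N" using close[of m n] by simp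
    also have "\<dots> < e^2" using N N_pos \<open>e > 0\<close> by (simp add: field_simps)
    finally show "dist (c m) (c n) < e"
      using \<open>e > 0\<close> by (simp add: dist_norm power_less_imp_less_base)
  qed
qed

lemma nearest_point_exists:
  fixes C :: "'a::{real_inner,complete_space} set"
  assumes "closed C" "convex C" "C \<noteq> {}"
  shows "\<exists>p\<in>C. \<forall>y\<in>C. norm (x - p) \<le> norm (x - y)"
proof -
  define d where "d = Inf ((\<lambda>y. norm (x - y)^2) ` C)"
  have d_le: "d \<le> norm (x - y)^2" if "y \<in> C" for y
    unfolding d_def by (rule cInf_lower) (use that in \<open>auto intro: bdd_belowI[of _ 0]\<close>)
  have "\<exists>c\<in>C. norm (x - c)^2 < d + 1 / Suc n" for n
    using cInf_lessD[of "(\<lambda>y. norm (x - y)^2) ` C" "d + 1 / Suc n"] assms(3)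
    unfolding d_def by auto
  then obtain c where cC: "\<And>n. c n \<in> C" and cn: "\<And>n. norm (x - c n)^2 < d + 1 / Suc n"
    by metis
  obtain p where p: "c \<longlonglongrightarrow> p"
    using minimizing_sequence_Cauchy[OF assms(2) cC d_le cn] Cauchy_convergent_iff convergent_def
    by blast
  have "p \<in> C" using closed_sequentially[OF assms(1)] cC p by blast
  have "(\<lambda>n. norm (x - c n)^2) \<longlonglongrightarrow> norm (x - p)^2"
    by (intro tendsto_intros p)
  moreover have "(\<lambda>n. d + 1 / Suc n) \<longlonglongrightarrow> d + 0"
    using LIMSEQ_Suc[OF lim_const_over_n[of 1]] by (intro tendsto_add tendsto_const) simp
  ultimately have "norm (x - p)^2 \<le> d"
    using cn by (intro LIMSEQ_le[where X = "\<lambda>n. norm (x - c n)^2"]) (auto intro: less_imp_le)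
  then have "norm (x - p) \<le> norm (x - y)" if "y \<in> C" for y
    using d_le[OF that] by (smt (verit) norm_ge_zero power2_le_imp_le)
  with \<open>p \<in> C\<close> show ?thesis by blast
qed

lemma nearest_point_iff_obtuse:
  fixes C :: "'a::real_inner set"
  assumes "convex C" "p \<in> C"
  shows "(\<forall>y\<in>C. norm (x - p) \<le> norm (x - y)) \<longleftrightarrow> (\<forall>y\<in>C. inner (x - p) (y - p) \<le> 0)"
proof
  assume min: "\<forall>y\<in>C. norm (x - p) \<le> norm (x - y)"
  show "\<forall>y\<in>C. inner (x - p) (y - p) \<le> 0"
  proof (rule ballI, rule ccontr)
    fix y assume "y \<in> C" and "\<not> inner (x - p) (y - p) \<le> 0"
    define s where "s = inner (x - p) (y - p)"
    define n where "n = norm (y - p)^2"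
    have "s > 0" "n > 0" using \<open>\<not> _ \<le> 0\<close> unfolding s_def n_def by auto
    \<comment> \<open>a short step from p towards y decreases the distance to x\<close>
    define t where "t = min 1 (s / n)"
    have t: "0 < t" "t \<le> 1" "t * n \<le> s"
      using \<open>s > 0\<close> \<open>n > 0\<close> unfolding t_def by (auto simp: field_simps min_def)
    have "(1 - t) *\<^sub>R p + t *\<^sub>R y \<in> C" using convexD[OF assms(1,2) \<open>y \<in> C\<close>] t by auto
    then have "norm (x - p) \<le> norm (x - ((1 - t) *\<^sub>R p + t *\<^sub>R y))" using min by blast
    also have "x - ((1 - t) *\<^sub>R p + t *\<^sub>R y) = (x - p) - t *\<^sub>R (y - p)"
      by (simp add: algebra_simps)
    finally have "norm (x - p)^2 \<le> norm ((x - p) - t *\<^sub>R (y - p))^2" by (simp add: power_mono)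
    also have "\<dots> = norm (x - p)^2 - 2 * t * s + t^2 * n"
      unfolding power2_norm_eq_inner s_def n_def
      by (simp add: inner_diff_left inner_diff_right inner_commute power2_eq_square algebra_simps)
    finally have "2 * s \<le> t * n" using t by (simp add: power2_eq_square algebra_simps)
    then show False using t \<open>s > 0\<close> by simp
  qed
next
  assume obtuse: "\<forall>y\<in>C. inner (x - p) (y - p) \<le> 0"
  show "\<forall>y\<in>C. norm (x - p) \<le> norm (x - y)"
  proof
    fix y assume "y \<in> C"
    have "norm (x - y)^2 = norm (x - p)^2 - 2 * inner (x - p) (y - p) + norm (y - p)^2"
      unfolding power2_norm_eq_inner
      by (simp add: inner_diff_left inner_diff_right inner_commute algebra_simps)
    then have "norm (x - p)^2 \<le> norm (x - y)^2" using obtuse \<open>y \<in> C\<close> by (smt (verit) zero_le_power2)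
    then show "norm (x - p) \<le> norm (x - y)" using power2_le_imp_le norm_ge_zero by blast
  qed
qed

lemma obtuse_point_unique:
  fixes C :: "'a::real_inner set"
  assumes "p \<in> C" "q \<in> C"
    and "\<forall>y\<in>C. inner (x - p) (y - p) \<le> 0" "\<forall>y\<in>C. inner (x - q) (y - q) \<le> 0"
  shows "p = q"
proof -
  have "inner (x - p) (q - p) \<le> 0" "inner (x - q) (p - q) \<le> 0" using assms by auto
  then have "inner (q - p) (q - p) \<le> 0"
    by (simp add: inner_diff_left inner_diff_right inner_commute algebra_simps)
  then show ?thesis by (metis inner_eq_zero_iff eq_iff_diff_eq_0 inner_ge_zero order_antisym)
qed

lemma proj_obtuse_angle:
  fixes C :: "'a::{real_inner,complete_space} set"
  assumes "closed C" "convex C" "C \<noteq> {}"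
  shows "proj C x \<in> C \<and> (\<forall>y\<in>C. inner (x - proj C x) (y - proj C x) \<le> 0)"
proof -
  have "\<exists>!p. p \<in> C \<and> (\<forall>y\<in>C. norm (x - p) \<le> norm (x - y))"
    using nearest_point_exists[OF assms] obtuse_point_unique nearest_point_iff_obtuse[OF assms(2)]
    by metis
  then have "proj C x \<in> C \<and> (\<forall>y\<in>C. norm (x - proj C x) \<le> norm (x - y))"
    unfolding proj_def by (rule theI')
  then show ?thesis using nearest_point_iff_obtuse[OF assms(2)] by blast
qed

lemma proj_in: "closed C \<Longrightarrow> convex C \<Longrightarrow> C \<noteq> {} \<Longrightarrow> proj C x \<in> C"
  using proj_obtuse_angle by blast

lemma proj_obtuse:
  "closed C \<Longrightarrow> convex C \<Longrightarrow> C \<noteq> {} \<Longrightarrow> y \<in> C \<Longrightarrow> inner (x - proj C x) (y - proj C x) \<le> 0"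
  using proj_obtuse_angle by blast

lemma proj_le_dist:
  "closed C \<Longrightarrow> convex C \<Longrightarrow> C \<noteq> {} \<Longrightarrow> y \<in> C \<Longrightarrow> norm (x - proj C x) \<le> norm (x - y)"
  using proj_obtuse_angle nearest_point_iff_obtuse by metis

lemma proj_eqI:
  assumes "closed C" "convex C" "C \<noteq> {}" "p \<in> C" "\<forall>y\<in>C. inner (x - p) (y - p) \<le> 0"
  shows "proj C x = p"
  using obtuse_point_unique[of "proj C x" C p x] proj_obtuse_angle[OF assms(1-3), of x] assms(4,5)
  by blast

lemma proj_self: "closed C \<Longrightarrow> convex C \<Longrightarrow> y \<in> C \<Longrightarrow> proj C y = y"
  by (rule proj_eqI) auto

lemma proj_firmly_nonexpansive:
  assumes "closed C" "convex C" "C \<noteq> {}"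
  shows "norm (proj C x - proj C y)^2 \<le> inner (proj C x - proj C y) (x - y)"
proof -
  have "inner (x - proj C x) (proj C y - proj C x) \<le> 0" "inner (y - proj C y) (proj C x - proj C y) \<le> 0"
    using proj_obtuse[OF assms] proj_in[OF assms] by auto
  then show ?thesis unfolding power2_norm_eq_inner
    by (simp add: inner_diff_left inner_diff_right inner_commute algebra_simps)
qed

lemma proj_nonexpansive:
  assumes "closed C" "convex C" "C \<noteq> {}"
  shows "norm (proj C x - proj C y) \<le> norm (x - y)"
proof -
  have "norm (proj C x - proj C y)^2 \<le> norm (proj C x - proj C y) * norm (x - y)"
    using proj_firmly_nonexpansive[OF assms, of x y] Cauchy_Schwarz_ineq2[of "proj C x - proj C y" "x - y"]
    by linarith
  then show ?thesis
    by (metis mult_le_cancel_left norm_ge_zero not_le power2_eq_square mult_zero_left order.trans)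
qed

lemma refl_nonexpansive:
  assumes "closed C" "convex C" "C \<noteq> {}"
  shows "norm (refl C x - refl C y) \<le> norm (x - y)"
proof -
  have "norm (refl C x - refl C y)^2
      = 4 * norm (proj C x - proj C y)^2 - 4 * inner (proj C x - proj C y) (x - y) + norm (x - y)^2"
    unfolding refl_def power2_norm_eq_inner
    by (simp add: inner_diff_left inner_diff_right inner_commute algebra_simps)
  also have "\<dots> \<le> norm (x - y)^2" using proj_firmly_nonexpansive[OF assms, of x y] by simp
  finally show ?thesis using power2_le_imp_le norm_ge_zero by blast
qed

lemma DR_firmly_nonexpansive:
  assumes "closed A" "convex A" "A \<noteq> {}" "closed B" "convex B" "B \<noteq> {}"
  shows "norm (DR A B x - DR A B y)^2 + norm ((x - DR A B x) - (y - DR A B y))^2 \<le> norm (x - y)^2"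
proof -
  define N where "N z = refl B (refl A z)" for z
  \<comment> \<open>T is the average of the identity and the nonexpansive map R_B R_A\<close>
  have double: "z + N z = 2 *\<^sub>R DR A B z" for z
    unfolding DR_def N_def refl_def by (simp add: algebra_simps scaleR_2)
  have T: "DR A B z = (1/2) *\<^sub>R (z + N z)" for z
    unfolding double by simp
  have "norm (N x - N y) \<le> norm (x - y)"
    unfolding N_def using refl_nonexpansive[OF assms(4-6)] refl_nonexpansive[OF assms(1-3)] order_trans
    by blast
  then have "norm (N x - N y)^2 \<le> norm (x - y)^2" by (simp add: power_mono)
  moreover have "norm (DR A B x - DR A B y)^2 + norm ((x - DR A B x) - (y - DR A B y))^2
      = (1/2) * norm (x - y)^2 + (1/2) * norm (N x - N y)^2"
    unfolding T power2_norm_eq_inner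
    by (simp add: inner_diff_left inner_diff_right inner_add_left inner_add_right inner_commute algebra_simps)
  ultimately show ?thesis by linarith
qed

lemma proj_affine_orthogonal:
  fixes B :: "'a::{real_inner,complete_space} set"
  assumes "closed B" "affine B" "B \<noteq> {}" "b \<in> B" "b' \<in> B"
  shows "inner (w - proj B w) (b - b') = 0"
proof -
  have cvx: "convex B" using assms(2) affine_imp_convex by blast
  have p: "proj B w \<in> B" using proj_in[OF assms(1) cvx assms(3)] .
  \<comment> \<open>B contains the reflection of each of its points through proj B w\<close>
  have to_proj: "inner (w - proj B w) (c - proj B w) = 0" if "c \<in> B" for c
  proof -
    have "proj B w + 1 *\<^sub>R (proj B w - c) \<in> B" by (rule mem_affine_3_minus[OF assms(2) p p that])
    then have "inner (w - proj B w) ((proj B w + 1 *\<^sub>R (proj B w - c)) - proj B w) \<le> 0"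
      by (rule proj_obtuse[OF assms(1) cvx assms(3)])
    moreover have "inner (w - proj B w) (c - proj B w) \<le> 0"
      using proj_obtuse[OF assms(1) cvx assms(3) that] .
    ultimately show ?thesis by (simp add: inner_diff_right)
  qed
  have "b - b' = (b - proj B w) - (b' - proj B w)" by simp
  then show ?thesis using to_proj[OF assms(4)] to_proj[OF assms(5)] by (simp add: inner_diff_right)
qed

lemma proj_subspace_orthogonal:
  fixes S :: "'a::{real_inner,complete_space} set"
  assumes "closed S" "subspace S" "u \<in> S"
  shows "inner (z - proj S z) u = 0"
  using proj_affine_orthogonal[OF assms(1) subspace_imp_affine[OF assms(2)] _ assms(3) subspace_0[OF assms(2)]]
    assms(3) by auto

lemma proj_affine_eqI:
  fixes B :: "'a::{real_inner,complete_space} set"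
  assumes "closed B" "affine B" "p \<in> B" "\<And>b. b \<in> B \<Longrightarrow> inner (w - p) (b - p) = 0"
  shows "proj B w = p"
  using assms affine_imp_convex by (intro proj_eqI) auto

lemma proj_affine_add_diff:
  fixes B :: "'a::{real_inner,complete_space} set"
  assumes "closed B" "affine B" "B \<noteq> {}"
  shows "proj B (u + v - z) = proj B u + proj B v - proj B z"
proof (rule proj_affine_eqI[OF assms(1,2)])
  have "proj B t \<in> B" for t using proj_in[OF assms(1) affine_imp_convex[OF assms(2)] assms(3)] .
  then have "proj B u + 1 *\<^sub>R (proj B v - proj B z) \<in> B" by (intro mem_affine_3_minus[OF assms(2)])
  then show p: "proj B u + proj B v - proj B z \<in> B" by (simp add: algebra_simps)
  fix b assume "b \<in> B"
  have "u + v - z - (proj B u + proj B v - proj B z) = (u - proj B u) + (v - proj B v) - (z - proj B z)"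
    by (simp add: algebra_simps)
  then show "inner (u + v - z - (proj B u + proj B v - proj B z)) (b - (proj B u + proj B v - proj B z)) = 0"
    using proj_affine_orthogonal[OF assms \<open>b \<in> B\<close> p] by (simp add: inner_diff_left inner_add_left)
qed

lemma proj_affine_add_orthogonal:
  fixes B :: "'a::{real_inner,complete_space} set"
  assumes "closed B" "affine B" "B \<noteq> {}" "\<And>b b'. b \<in> B \<Longrightarrow> b' \<in> B \<Longrightarrow> inner v (b - b') = 0"
  shows "proj B (w + v) = proj B w"
proof (rule proj_affine_eqI[OF assms(1,2)])
  show p: "proj B w \<in> B" using proj_in[OF assms(1) affine_imp_convex[OF assms(2)] assms(3)] .
  fix b assume "b \<in> B"
  show "inner (w + v - proj B w) (b - proj B w) = 0"
    using proj_affine_orthogonal[OF assms(1-3) \<open>b \<in> B\<close> p, of w] assms(4)[OF \<open>b \<in> B\<close> p]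
    by (simp add: inner_add_left algebra_simps)
qed

lemma proj_affine_DR:
  fixes B :: "'a::{real_inner,complete_space} set"
  assumes "closed B" "affine B" "B \<noteq> {}"
  shows "proj B (DR A B x) = proj B (proj A x)"
proof -
  have "DR A B x = proj A x + proj B (refl A x) - refl A x"
    unfolding DR_def refl_def by (simp add: algebra_simps scaleR_2)
  then have "proj B (DR A B x) = proj B (proj A x) + proj B (proj B (refl A x)) - proj B (refl A x)"
    using proj_affine_add_diff[OF assms] by simp
  also have "proj B (proj B (refl A x)) = proj B (refl A x)"
    using assms affine_imp_convex by (intro proj_self proj_in) auto
  finally show ?thesis by simp
qed

lemma weakly_conv_in_closed_convex:
  fixes C :: "'a::{real_inner,complete_space} set"
  assumes "closed C" "convex C" "C \<noteq> {}" "\<And>n. s n \<in> C" "weakly_conv s q"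
  shows "q \<in> C"
proof -
  define p where "p = proj C q"
  have "p \<in> C" unfolding p_def using proj_in[OF assms(1-3)] .
  have "(\<lambda>n. inner (s n) (q - p)) \<longlonglongrightarrow> inner q (q - p)"
    using assms(5) unfolding weakly_conv_def by blast
  then have "(\<lambda>n. inner (s n) (q - p) - inner p (q - p)) \<longlonglongrightarrow> inner q (q - p) - inner p (q - p)"
    by (rule tendsto_diff[OF _ tendsto_const])
  moreover have "inner (s n) (q - p) - inner p (q - p) \<le> 0" for n
  proof -
    have "inner (q - p) (s n - p) \<le> 0" unfolding p_def using proj_obtuse[OF assms(1-3) assms(4)] .
    then show ?thesis by (simp add: inner_diff_left inner_diff_right inner_commute)
  qed
  ultimately have "inner q (q - p) - inner p (q - p) \<le> 0"
    by (intro LIMSEQ_le_const2) auto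
  then have "inner (q - p) (q - p) \<le> 0" by (simp add: inner_diff_left)
  then have "q = p" by (metis inner_eq_zero_iff eq_iff_diff_eq_0 inner_ge_zero order_antisym)
  with \<open>p \<in> C\<close> show ?thesis by simp
qed

lemma weakly_conv_add_tendsto:
  assumes "weakly_conv s q" "t \<longlonglongrightarrow> c"
  shows "weakly_conv (\<lambda>n. s n + t n) (q + c)"
  unfolding weakly_conv_def inner_add_left
proof
  fix z
  show "(\<lambda>n. inner (s n) z + inner (t n) z) \<longlonglongrightarrow> inner q z + inner c z"
  proof (rule tendsto_add)
    show "(\<lambda>n. inner (s n) z) \<longlonglongrightarrow> inner q z" using assms(1) unfolding weakly_conv_def by blast
    show "(\<lambda>n. inner (t n) z) \<longlonglongrightarrow> inner c z" by (intro tendsto_intros assms(2))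
  qed
qed

lemma weakly_conv_Suc:
  assumes "weakly_conv (\<lambda>n. s (Suc n)) q"
  shows "weakly_conv s q"
  unfolding weakly_conv_def
proof
  fix z
  have "(\<lambda>n. inner (s (Suc n)) z) \<longlonglongrightarrow> inner q z" using assms unfolding weakly_conv_def by blast
  then show "(\<lambda>n. inner (s n) z) \<longlonglongrightarrow> inner q z" by (rule LIMSEQ_imp_Suc)
qed

lemma riesz_representation:
  fixes l :: "'a::{real_inner,complete_space} \<Rightarrow> real"
  assumes "bounded_linear l"
  shows "\<exists>q. \<forall>z. l z = inner q z"
proof (cases "\<forall>z. l z = 0")
  case True
  then show ?thesis by (intro exI[of _ 0]) simp
next
  case False
  interpret l: bounded_linear l by fact
  from False obtain z0 where "l z0 \<noteq> 0" by blast
  define K where "K = {z. l z = 0}"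
  have "closed K" unfolding K_def
    by (intro closed_Collect_eq continuous_on_const linear_continuous_on assms)
  have "subspace K" unfolding K_def subspace_def by (simp add: l.add l.scale)
  \<comment> \<open>w spans the orthogonal complement of the kernel\<close>
  define w where "w = z0 - proj K z0"
  have "proj K z0 \<in> K"
    using proj_in[OF \<open>closed K\<close> subspace_imp_convex[OF \<open>subspace K\<close>]] subspace_0[OF \<open>subspace K\<close>]
    by blast
  then have lw: "l w = l z0" unfolding w_def K_def by (simp add: l.diff)
  show ?thesis
  proof (intro exI[of _ "(l w / inner w w) *\<^sub>R w"] allI)
    fix z
    have "z - (l z / l w) *\<^sub>R w \<in> K"
      unfolding K_def using lw \<open>l z0 \<noteq> 0\<close> by (simp add: l.diff l.scale)
    then have "inner w (z - (l z / l w) *\<^sub>R w) = 0"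
      using proj_subspace_orthogonal[OF \<open>closed K\<close> \<open>subspace K\<close>] unfolding w_def by blast
    then have "inner w z = (l z / l w) * inner w w" by (simp add: inner_diff_right)
    moreover have "w \<noteq> 0" using lw \<open>l z0 \<noteq> 0\<close> by auto
    ultimately show "l z = inner ((l w / inner w w) *\<^sub>R w) z"
      using lw \<open>l z0 \<noteq> 0\<close> by (simp add: field_simps)
  qed
qed

lemma weakly_conv_if_inner_convergent:
  fixes y :: "nat \<Rightarrow> 'a::{real_inner,complete_space}"
  assumes bound: "\<And>k. norm (y k) \<le> M" and conv: "\<And>z. convergent (\<lambda>k. inner (y k) z)"
  shows "\<exists>q. weakly_conv y q"
proof -
  define l where "l z = lim (\<lambda>k. inner (y k) z)" for z
  have lim: "(\<lambda>k. inner (y k) z) \<longlonglongrightarrow> l z" for z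
    using conv[of z] unfolding l_def by (simp add: convergent_LIMSEQ_iff)
  have "bounded_linear l"
  proof (rule bounded_linear_intro[of _ M])
    show "l (u + v) = l u + l v" for u v
      using lim[of "u + v"] tendsto_add[OF lim lim] unfolding inner_add_right by (rule LIMSEQ_unique)
    show "l (c *\<^sub>R u) = c *\<^sub>R l u" for c u
      using lim[of "c *\<^sub>R u"] tendsto_mult_left[OF lim] unfolding inner_scaleR_right
      by (auto intro: LIMSEQ_unique)
    show "norm (l u) \<le> norm u * M" for u
    proof -
      have "\<bar>inner (y k) u\<bar> \<le> norm u * M" for k
        using Cauchy_Schwarz_ineq2[of "y k" u] bound[of k]
        by (smt (verit) mult.commute mult_right_mono norm_ge_zero)
      then show ?thesis unfolding real_norm_def by (intro LIMSEQ_le_const2[OF tendsto_rabs[OF lim]]) auto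
    qed
  qed
  then obtain q where "\<And>z. l z = inner q z" using riesz_representation by blast
  then have "weakly_conv y q" unfolding weakly_conv_def using lim by simp
  then show ?thesis ..
qed

lemma subspace_inner_convergent: "subspace {z. convergent (\<lambda>k. inner (y k) z)}"
  unfolding subspace_def
  by (auto simp: inner_add_right intro: convergent_add convergent_mult convergent_const)

lemma closed_inner_convergent:
  fixes y :: "nat \<Rightarrow> 'a::{real_inner,complete_space}"
  assumes bound: "\<And>k. norm (y k) \<le> M"
  shows "closed {z. convergent (\<lambda>k. inner (y k) z)}"
  unfolding closed_sequential_limits
proof (intro allI impI; elim conjE)
  fix zs :: "nat \<Rightarrow> 'a" and z
  assume zs: "\<forall>n. zs n \<in> {z. convergent (\<lambda>k. inner (y k) z)}" and "zs \<longlonglongrightarrow> z"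
  have M: "0 \<le> M" using bound[of 0] norm_ge_zero order_trans by blast
  have "Cauchy (\<lambda>k. inner (y k) z)"
  proof (rule metric_CauchyI)
    fix e :: real assume "e > 0"
    have "\<forall>\<^sub>F j in sequentially. dist (zs j) z < e / (4 * (M + 1))"
      using \<open>zs \<longlonglongrightarrow> z\<close> \<open>e > 0\<close> M by (intro tendstoD) auto
    then obtain j where "norm (zs j - z) < e / (4 * (M + 1))"
      unfolding dist_norm eventually_sequentially by blast
    then have j: "norm (z - zs j) < e / (4 * (M + 1))" by (simp add: norm_minus_commute)
    have "Cauchy (\<lambda>k. inner (y k) (zs j))" using zs by (simp add: Cauchy_convergent_iff)
    then obtain N where
      N: "\<And>m n. m \<ge> N \<Longrightarrow> n \<ge> N \<Longrightarrow> dist (inner (y m) (zs j)) (inner (y n) (zs j)) < e/2"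
      using metric_CauchyD[of _ "e/2"] \<open>e > 0\<close> by (meson half_gt_zero)
    have near: "\<bar>inner (y k) (z - zs j)\<bar> \<le> e / 4" for k
    proof -
      have "\<bar>inner (y k) (z - zs j)\<bar> \<le> M * (e / (4 * (M + 1)))"
        using Cauchy_Schwarz_ineq2[of "y k" "z - zs j"] bound[of k] j M
        by (smt (verit) mult_mono norm_ge_zero)
      also have "\<dots> \<le> e / 4" using M \<open>e > 0\<close> by (simp add: field_simps)
      finally show ?thesis .
    qed
    show "\<exists>N. \<forall>m\<ge>N. \<forall>n\<ge>N. dist (inner (y m) z) (inner (y n) z) < e"
    proof (intro exI allI impI)
      fix m n assume mn: "m \<ge> N" "n \<ge> N"
      have "inner (y m) z - inner (y n) z
          = (inner (y m) (zs j) - inner (y n) (zs j)) + inner (y m) (z - zs j) - inner (y n) (z - zs j)"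
        by (simp add: inner_diff_right)
      then show "dist (inner (y m) z) (inner (y n) z) < e"
        using N[OF mn] near[of m] near[of n] unfolding dist_real_def by linarith
    qed
  qed
  then show "z \<in> {z. convergent (\<lambda>k. inner (y k) z)}" by (simp add: Cauchy_convergent_iff)
qed

lemma subseq_inner_convergent:
  fixes s :: "nat \<Rightarrow> 'a::real_inner"
  assumes bound: "\<And>n. norm (s n) \<le> M"
  shows "\<exists>r. strict_mono r \<and> (\<forall>m. convergent (\<lambda>k. inner (s (r k)) (s m)))"
proof -
  have bounded: "bounded (range (\<lambda>k. inner (s (sq k)) (s m)))" for sq m
  proof -
    have "\<bar>inner (s (sq k)) (s m)\<bar> \<le> M * norm (s m)" for k
      using Cauchy_Schwarz_ineq2[of "s (sq k)" "s m"] bound[of "sq k"]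
      by (meson mult_right_mono norm_ge_zero order_trans)
    then show ?thesis unfolding bounded_iff by auto
  qed
  interpret S: subseqs "\<lambda>m r. convergent (\<lambda>k. inner (s (r k)) (s m))"
  proof
    fix m and sq :: "nat \<Rightarrow> nat"
    obtain L r' where "strict_mono r'" "((\<lambda>k. inner (s (sq k)) (s m)) \<circ> r') \<longlonglongrightarrow> L"
      using bounded_imp_convergent_subsequence[OF bounded] by blast
    then show "\<exists>r'. strict_mono r' \<and> convergent (\<lambda>k. inner (s ((sq \<circ> r') k)) (s m))"
      by (auto simp: o_def convergent_def)
  qed
  have "convergent (\<lambda>k. inner (s (S.diagseq k)) (s m))" for m
  proof -
    have "convergent (\<lambda>k. inner (s ((S.diagseq \<circ> (+) (Suc m)) k)) (s m))"
      by (rule S.diagseq_holds) (auto simp: o_def dest: convergent_subseq_convergent)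
    then obtain L where "(\<lambda>k. inner (s (S.diagseq (k + Suc m))) (s m)) \<longlonglongrightarrow> L"
      by (auto simp: o_def add.commute convergent_def)
    then have "(\<lambda>k. inner (s (S.diagseq k)) (s m)) \<longlonglongrightarrow> L" by (rule LIMSEQ_offset)
    then show ?thesis unfolding convergent_def by blast
  qed
  then show ?thesis using S.subseq_diagseq by blast
qed

lemma bounded_weakly_convergent_subseq:
  fixes s :: "nat \<Rightarrow> 'a::{real_inner,complete_space}"
  assumes bound: "\<And>n. norm (s n) \<le> M"
  shows "\<exists>r q. strict_mono r \<and> weakly_conv (s \<circ> r) q"
proof -
  obtain r where "strict_mono r" and conv_s: "\<And>m. convergent (\<lambda>k. inner (s (r k)) (s m))"
    using subseq_inner_convergent[of s M] bound by blast
  define V where "V = {z. convergent (\<lambda>k. inner (s (r k)) z)}"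
  have "subspace V" unfolding V_def by (rule subspace_inner_convergent)
  have "closed V" unfolding V_def by (rule closed_inner_convergent[of _ M]) (use bound in simp)
  \<comment> \<open>each s (r k) lies in V, so it has the same inner product with z and with proj V z\<close>
  have "convergent (\<lambda>k. inner (s (r k)) z)" for z
  proof -
    have "proj V z \<in> V"
      using proj_in[OF \<open>closed V\<close> subspace_imp_convex[OF \<open>subspace V\<close>]] subspace_0[OF \<open>subspace V\<close>]
      by blast
    moreover have "inner (s (r k)) z = inner (s (r k)) (proj V z)" for k
    proof -
      have "s (r k) \<in> V" unfolding V_def using conv_s by simp
      then have "inner (z - proj V z) (s (r k)) = 0"
        by (rule proj_subspace_orthogonal[OF \<open>closed V\<close> \<open>subspace V\<close>])
      then show ?thesis by (metis inner_commute inner_diff_left right_minus_eq)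
    qed
    ultimately show ?thesis unfolding V_def by simp
  qed
  then obtain q where "weakly_conv (\<lambda>k. s (r k)) q"
    using weakly_conv_if_inner_convergent[of "\<lambda>k. s (r k)" M] bound by blast
  then show ?thesis using \<open>strict_mono r\<close> unfolding o_def by blast
qed

lemma weakly_conv_if_unique_cluster:
  fixes p :: "nat \<Rightarrow> 'a::{real_inner,complete_space}"
  assumes bound: "\<And>n. norm (p n) \<le> M"
    and unique: "\<And>r1 r2 q1 q2. strict_mono r1 \<Longrightarrow> strict_mono r2 \<Longrightarrow>
      weakly_conv (p \<circ> r1) q1 \<Longrightarrow> weakly_conv (p \<circ> r2) q2 \<Longrightarrow> q1 = q2"
  shows "\<exists>q. weakly_conv p q"
proof -
  obtain r0 q where r0: "strict_mono r0" "weakly_conv (p \<circ> r0) q"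
    using bounded_weakly_convergent_subseq[of p M] bound by blast
  have "(\<lambda>n. inner (p n) z) \<longlonglongrightarrow> inner q z" for z
  proof (rule ccontr)
    assume "\<not> ?thesis"
    then obtain e where "e > 0" and "\<not> (\<forall>\<^sub>F n in sequentially. dist (inner (p n) z) (inner q z) < e)"
      unfolding tendsto_iff by blast
    then have "\<forall>N. \<exists>n\<ge>N. e \<le> dist (inner (p n) z) (inner q z)"
      unfolding eventually_sequentially by (meson not_le)
    then have "infinite {n. e \<le> dist (inner (p n) z) (inner q z)}"
      unfolding infinite_nat_iff_unbounded_le by auto
    then obtain r1 :: "nat \<Rightarrow> nat" where r1: "strict_mono r1" "\<And>n. e \<le> dist (inner (p (r1 n)) z) (inner q z)"
      using infinite_enumerate by blast
    obtain r2 q2 where r2: "strict_mono r2" "weakly_conv ((p \<circ> r1) \<circ> r2) q2"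
      using bounded_weakly_convergent_subseq[of "p \<circ> r1" M] bound by auto
    have "q2 = q" using unique[OF strict_mono_o[OF r1(1) r2(1)] r0(1)] r2(2) r0(2) by (simp add: o_assoc)
    then have "(\<lambda>n. inner (p (r1 (r2 n))) z) \<longlonglongrightarrow> inner q z"
      using r2(2) unfolding weakly_conv_def by simp
    then have "\<forall>\<^sub>F n in sequentially. dist (inner (p (r1 (r2 n))) z) (inner q z) < e"
      using \<open>e > 0\<close> tendstoD by blast
    then obtain n where "dist (inner (p (r1 (r2 n))) z) (inner q z) < e"
      unfolding eventually_sequentially by (meson order_refl)
    then show False using r1(2)[of "r2 n"] by simp
  qed
  then show ?thesis unfolding weakly_conv_def by blast
qed

lemma weakly_conv_if_clusters_in:
  fixes p :: "nat \<Rightarrow> 'a::{real_inner,complete_space}"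
  assumes bound: "\<And>n. norm (p n) \<le> M"
    and inner_conv: "\<And>u v. u \<in> C \<Longrightarrow> v \<in> C \<Longrightarrow> convergent (\<lambda>n. inner (p n) (u - v))"
    and clusters: "\<And>r q. strict_mono r \<Longrightarrow> weakly_conv (p \<circ> r) q \<Longrightarrow> q \<in> C"
  shows "\<exists>q\<in>C. weakly_conv p q"
proof -
  have "q1 = q2" if r: "strict_mono r1" "strict_mono r2"
    and q: "weakly_conv (p \<circ> r1) q1" "weakly_conv (p \<circ> r2) q2" for r1 r2 q1 q2
  proof -
    obtain L where L: "(\<lambda>n. inner (p n) (q2 - q1)) \<longlonglongrightarrow> L"
      using inner_conv[OF clusters[OF r(2) q(2)] clusters[OF r(1) q(1)]] convergent_def by blast
    have "inner q1 (q2 - q1) = L" "inner q2 (q2 - q1) = L"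
      using LIMSEQ_unique[OF LIMSEQ_subseq_LIMSEQ[OF L r(1)]]
        LIMSEQ_unique[OF LIMSEQ_subseq_LIMSEQ[OF L r(2)]] q
      unfolding weakly_conv_def by (auto simp: o_def)
    then have "inner (q2 - q1) (q2 - q1) = 0" by (simp add: inner_diff_left)
    then show ?thesis by simp
  qed
  then obtain q where "weakly_conv p q" using weakly_conv_if_unique_cluster[of p M] bound by blast
  moreover have "q \<in> C" using clusters[OF strict_mono_id] \<open>weakly_conv p q\<close> by simp
  ultimately show ?thesis by blast
qed

locale dr_gap =
  fixes A B :: "'a::{real_inner,complete_space} set" and g :: 'a
  assumes A_closed: "closed A" and A_convex: "convex A"
    and B_closed: "closed B" and B_affine: "affine B"
    and gap_obtuse: "\<And>a b. a \<in> A \<Longrightarrow> b \<in> B \<Longrightarrow> inner g g \<le> inner g (b - a)"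
    and gap_attained: "\<exists>a\<in>A. a + g \<in> B"
begin

definition E :: "'a set" where "E = {e \<in> A. e + g \<in> B}"

lemma E_nonempty: "E \<noteq> {}"
  using gap_attained unfolding E_def by blast

lemma A_nonempty: "A \<noteq> {}" and B_nonempty: "B \<noteq> {}" and B_convex: "convex B"
  using gap_attained B_affine affine_imp_convex by auto

lemmas A_proj = A_closed A_convex A_nonempty and B_proj = B_closed B_convex B_nonempty

lemma gap_orthogonal:
  assumes "b \<in> B" "b' \<in> B"
  shows "inner g (b - b') = 0"
proof -
  obtain a where "a \<in> A" "a + g \<in> B" using gap_attained by blast
  have "a + g + t *\<^sub>R (b - b') \<in> B" for t using mem_affine_3_minus[OF B_affine \<open>a + g \<in> B\<close> assms] .
  then have "inner g g \<le> inner g (a + g + t *\<^sub>R (b - b') - a)" for t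
    using gap_obtuse[OF \<open>a \<in> A\<close>] by blast
  then have "0 \<le> t * inner g (b - b')" for t by (simp add: inner_add_right inner_diff_right)
  from this[of 1] this[of "-1"] show ?thesis by simp
qed

lemma proj_B_add_gap: "proj B (w + t *\<^sub>R g) = proj B w"
  using gap_orthogonal by (intro proj_affine_add_orthogonal[OF B_closed B_affine B_nonempty]) simp

lemma proj_A_along_gap:
  assumes "e \<in> E" "0 \<le> t"
  shows "proj A (e + t *\<^sub>R g) = e"
proof (rule proj_eqI[OF A_proj])
  show "e \<in> A" using assms(1) unfolding E_def by simp
  show "\<forall>a\<in>A. inner (e + t *\<^sub>R g - e) (a - e) \<le> 0"
  proof
    fix a assume "a \<in> A"
    have "inner g g \<le> inner g (e + g - a)" using gap_obtuse[OF \<open>a \<in> A\<close>] assms(1) unfolding E_def by simp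
    then have "inner g (a - e) \<le> 0" by (simp add: inner_add_right inner_diff_right)
    then show "inner (e + t *\<^sub>R g - e) (a - e) \<le> 0" using assms(2) by (simp add: mult_nonneg_nonpos)
  qed
qed

lemma proj_B_along_gap:
  assumes "e \<in> E"
  shows "proj B (e + t *\<^sub>R g) = e + g"
proof -
  have "proj B (e + t *\<^sub>R g) = proj B ((e + g) + (t - 1) *\<^sub>R g)" by (simp add: algebra_simps)
  also have "\<dots> = e + g"
    using assms unfolding proj_B_add_gap E_def by (simp add: proj_self B_closed B_convex)
  finally show ?thesis .
qed

lemma DR_along_gap:
  assumes "e \<in> E" "0 \<le> t"
  shows "DR A B (e + t *\<^sub>R g) = e + (t + 1) *\<^sub>R g"
proof -
  have R: "refl A (e + t *\<^sub>R g) = e + (- t) *\<^sub>R g"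
    unfolding refl_def proj_A_along_gap[OF assms] by (simp add: algebra_simps scaleR_2)
  show ?thesis
    unfolding DR_def R proj_A_along_gap[OF assms] proj_B_along_gap[OF assms(1)]
    by (simp add: algebra_simps)
qed

text \<open>When A and B do not meet, the iterates drift off like n g; removing the drift leaves
  a sequence that is Fej\'er monotone with respect to E.\<close>
definition shifted_orbit :: "'a \<Rightarrow> nat \<Rightarrow> 'a" where
  "shifted_orbit x n = (DR A B ^^ n) x - real n *\<^sub>R g"

lemma shifted_orbit_Fejer:
  assumes "e \<in> E"
  shows "norm (shifted_orbit x (Suc n) - e)^2 + norm (shifted_orbit x n - shifted_orbit x (Suc n))^2
    \<le> norm (shifted_orbit x n - e)^2"
proof -
  define y where "y = (DR A B ^^ n) x"
  define z where "z = e + real n *\<^sub>R g"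
  have Tz: "DR A B z = e + real (Suc n) *\<^sub>R g"
    unfolding z_def using DR_along_gap[OF assms, of "real n"] by (simp add: add.commute)
  have "DR A B y - DR A B z = shifted_orbit x (Suc n) - e"
    "(y - DR A B y) - (z - DR A B z) = shifted_orbit x n - shifted_orbit x (Suc n)"
    "y - z = shifted_orbit x n - e"
    unfolding Tz unfolding shifted_orbit_def y_def z_def by (simp_all add: algebra_simps)
  then show ?thesis using DR_firmly_nonexpansive[OF A_proj B_proj, of y z] by simp
qed

lemma shifted_orbit_dist_decseq:
  assumes "e \<in> E"
  shows "decseq (\<lambda>n. norm (shifted_orbit x n - e)^2)"
  unfolding decseq_Suc_iff using shifted_orbit_Fejer[OF assms] by (smt (verit) zero_le_power2)

lemma shifted_orbit_dist_le:
  assumes "e \<in> E"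
  shows "norm (shifted_orbit x n - e) \<le> norm (shifted_orbit x 0 - e)"
  using decseqD[OF shifted_orbit_dist_decseq[OF assms], of 0 n] power2_le_imp_le norm_ge_zero by blast

lemma shifted_orbit_dist_convergent:
  assumes "e \<in> E"
  obtains L where "(\<lambda>n. norm (shifted_orbit x n - e)^2) \<longlonglongrightarrow> L"
proof -
  have "\<forall>i. (0::real) \<le> norm (shifted_orbit x i - e)^2" by simp
  then show thesis using decseq_convergent[OF shifted_orbit_dist_decseq[OF assms]] that by metis
qed

lemma shifted_orbit_step_tendsto_0: "(\<lambda>n. shifted_orbit x n - shifted_orbit x (Suc n)) \<longlonglongrightarrow> 0"
proof -
  obtain e where "e \<in> E" using E_nonempty by blast
  obtain L where L: "(\<lambda>n. norm (shifted_orbit x n - e)^2) \<longlonglongrightarrow> L"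
    using shifted_orbit_dist_convergent[OF \<open>e \<in> E\<close>] .
  have "(\<lambda>n. norm (shifted_orbit x n - e)^2 - norm (shifted_orbit x (Suc n) - e)^2) \<longlonglongrightarrow> L - L"
    by (intro tendsto_diff L LIMSEQ_Suc[OF L])
  then have upper: "(\<lambda>n. norm (shifted_orbit x n - e)^2 - norm (shifted_orbit x (Suc n) - e)^2) \<longlonglongrightarrow> 0"
    by simp
  have "norm (shifted_orbit x n - shifted_orbit x (Suc n))^2
      \<le> norm (shifted_orbit x n - e)^2 - norm (shifted_orbit x (Suc n) - e)^2" for n
    using shifted_orbit_Fejer[OF \<open>e \<in> E\<close>, of x n] by linarith
  then have "\<forall>\<^sub>F n in sequentially. norm (shifted_orbit x n - shifted_orbit x (Suc n))^2
      \<le> norm (shifted_orbit x n - e)^2 - norm (shifted_orbit x (Suc n) - e)^2"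
    by simp
  then have "(\<lambda>n. norm (shifted_orbit x n - shifted_orbit x (Suc n))^2) \<longlonglongrightarrow> 0"
    by (intro tendsto_sandwich[OF _ _ tendsto_const upper]) auto
  then have "(\<lambda>n. sqrt (norm (shifted_orbit x n - shifted_orbit x (Suc n))^2)) \<longlonglongrightarrow> sqrt 0"
    by (intro tendsto_real_sqrt)
  then show ?thesis by (simp add: tendsto_norm_zero_iff)
qed

lemma shifted_orbit_inner_convergent:
  assumes "u \<in> E" "v \<in> E"
  shows "convergent (\<lambda>n. inner (shifted_orbit x n) (u - v))"
proof -
  have polar: "inner s (u - v) = (norm (s - v)^2 - norm (s - u)^2 + norm u^2 - norm v^2) / 2" for s
    unfolding power2_norm_eq_inner
    by (simp add: inner_diff_left inner_diff_right inner_commute field_simps)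
  obtain Lu Lv where "(\<lambda>n. norm (shifted_orbit x n - u)^2) \<longlonglongrightarrow> Lu"
    and "(\<lambda>n. norm (shifted_orbit x n - v)^2) \<longlonglongrightarrow> Lv"
    using shifted_orbit_dist_convergent assms by metis
  then have "(\<lambda>n. inner (shifted_orbit x n) (u - v)) \<longlonglongrightarrow> (Lv - Lu + norm u^2 - norm v^2) / 2"
    unfolding polar by (intro tendsto_divide tendsto_add tendsto_diff tendsto_const) auto
  then show ?thesis unfolding convergent_def by blast
qed

lemma proj_residual_le_step:
  "norm (proj A ((DR A B ^^ n) x) + g - proj B ((DR A B ^^ Suc n) x))
    \<le> norm (shifted_orbit x n - shifted_orbit x (Suc n))"
proof -
  define y where "y = (DR A B ^^ n) x"
  have "proj B ((DR A B ^^ Suc n) x) = proj B (proj A y + 1 *\<^sub>R g)"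
    unfolding y_def proj_B_add_gap by (simp add: proj_affine_DR[OF B_closed B_affine B_nonempty])
  then have "norm (proj A y + g - proj B ((DR A B ^^ Suc n) x)) \<le> norm (proj A y + g - proj B (refl A y))"
    using proj_le_dist[OF B_proj proj_in[OF B_proj]] by simp
  also have "\<dots> = norm (shifted_orbit x n - shifted_orbit x (Suc n))"
    unfolding shifted_orbit_def y_def by (simp add: DR_def algebra_simps norm_minus_commute)
  finally show ?thesis unfolding y_def .
qed

lemma proj_residual_tendsto_0:
  "(\<lambda>n. proj A ((DR A B ^^ n) x) + g - proj B ((DR A B ^^ Suc n) x)) \<longlonglongrightarrow> 0"
proof (rule tendsto_norm_zero_cancel, rule tendsto_sandwich[OF _ _ tendsto_const])
  show "(\<lambda>n. norm (shifted_orbit x n - shifted_orbit x (Suc n))) \<longlonglongrightarrow> 0"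
    using tendsto_norm_zero[OF shifted_orbit_step_tendsto_0] .
qed (use proj_residual_le_step in auto)

lemma proj_B_shifted_orbit: "proj B (shifted_orbit x n) = proj B ((DR A B ^^ n) x)"
  unfolding shifted_orbit_def using proj_B_add_gap[of "(DR A B ^^ n) x" "- real n"] by simp

lemma proj_B_orbit_bounded:
  obtains M where "\<And>n. norm (proj B ((DR A B ^^ n) x)) \<le> M"
proof -
  obtain e where "e \<in> E" using E_nonempty by blast
  have "norm (proj B ((DR A B ^^ n) x)) \<le> norm (e + g) + norm (shifted_orbit x 0 - e)" for n
  proof -
    have "e + g = proj B e" using proj_B_along_gap[OF \<open>e \<in> E\<close>, of 0] by simp
    then have "norm (proj B ((DR A B ^^ n) x) - (e + g)) \<le> norm (shifted_orbit x n - e)"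
      using proj_nonexpansive[OF B_proj] by (simp add: proj_B_shifted_orbit[symmetric])
    also have "\<dots> \<le> norm (shifted_orbit x 0 - e)" by (rule shifted_orbit_dist_le[OF \<open>e \<in> E\<close>])
    finally show ?thesis by (smt (verit) norm_triangle_sub)
  qed
  then show thesis using that by blast
qed

lemma proj_B_orbit_inner_convergent:
  assumes "u \<in> E" "v \<in> E"
  shows "convergent (\<lambda>n. inner (proj B ((DR A B ^^ n) x)) (u - v))"
proof -
  have "inner (shifted_orbit x n - proj B (shifted_orbit x n)) ((u + g) - (v + g)) = 0" for n
    using assms unfolding E_def by (intro proj_affine_orthogonal[OF B_closed B_affine B_nonempty]) auto
  then have "inner (proj B ((DR A B ^^ n) x)) (u - v) = inner (shifted_orbit x n) (u - v)" for n
    unfolding proj_B_shifted_orbit by (simp add: inner_diff_left)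
  then show ?thesis using shifted_orbit_inner_convergent[OF assms] by simp
qed

lemma weak_cluster_in_E:
  assumes "strict_mono r" and q: "weakly_conv (\<lambda>k. proj B ((DR A B ^^ Suc (r k)) x) - g) q"
  shows "q \<in> E"
proof -
  have "weakly_conv (\<lambda>k. (proj B ((DR A B ^^ Suc (r k)) x) - g) + g) (q + g)"
    by (rule weakly_conv_add_tendsto[OF q tendsto_const])
  then have "q + g \<in> B"
    using weakly_conv_in_closed_convex[OF B_proj, of "\<lambda>k. proj B ((DR A B ^^ Suc (r k)) x)"]
      proj_in[OF B_proj] by simp
  have "(\<lambda>k. proj A ((DR A B ^^ r k) x) + g - proj B ((DR A B ^^ Suc (r k)) x)) \<longlonglongrightarrow> 0"
    using LIMSEQ_subseq_LIMSEQ[OF proj_residual_tendsto_0 assms(1)] by (simp add: o_def)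
  then have "weakly_conv (\<lambda>k. (proj B ((DR A B ^^ Suc (r k)) x) - g)
      + (proj A ((DR A B ^^ r k) x) + g - proj B ((DR A B ^^ Suc (r k)) x))) (q + 0)"
    by (rule weakly_conv_add_tendsto[OF q])
  then have "q \<in> A"
    using weakly_conv_in_closed_convex[OF A_proj, of "\<lambda>k. proj A ((DR A B ^^ r k) x)"]
      proj_in[OF A_proj] by simp
  with \<open>q + g \<in> B\<close> show ?thesis unfolding E_def by simp
qed

theorem DR_shadows_weakly_conv:
  "\<exists>e\<in>E. weakly_conv (\<lambda>n. proj A ((DR A B ^^ n) x)) e
    \<and> weakly_conv (\<lambda>n. proj B ((DR A B ^^ n) x)) (e + g)"
proof -
  define b where "b n = proj B ((DR A B ^^ Suc n) x) - g" for n
  obtain M where "\<And>n. norm (proj B ((DR A B ^^ n) x)) \<le> M" using proj_B_orbit_bounded by blast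
  then have "norm (b n) \<le> M + norm g" for n unfolding b_def by (smt (verit) norm_triangle_ineq4)
  moreover have "convergent (\<lambda>n. inner (b n) (u - v))" if "u \<in> E" "v \<in> E" for u v
    unfolding b_def inner_diff_left
  proof (intro convergent_diff convergent_const)
    show "convergent (\<lambda>n. inner (proj B ((DR A B ^^ Suc n) x)) (u - v))"
      using proj_B_orbit_inner_convergent[OF that]
        convergent_Suc_iff[of "\<lambda>n. inner (proj B ((DR A B ^^ n) x)) (u - v)"] by blast
  qed
  moreover have "q \<in> E" if "strict_mono r" "weakly_conv (b \<circ> r) q" for r q
    using weak_cluster_in_E that unfolding b_def o_def by blast
  ultimately obtain e where "e \<in> E" and b_e: "weakly_conv b e"
    using weakly_conv_if_clusters_in[of b "M + norm g" E] by blast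
  have "weakly_conv (\<lambda>n. b n + (proj A ((DR A B ^^ n) x) + g - proj B ((DR A B ^^ Suc n) x))) (e + 0)"
    by (rule weakly_conv_add_tendsto[OF b_e proj_residual_tendsto_0])
  then have "weakly_conv (\<lambda>n. proj A ((DR A B ^^ n) x)) e" unfolding b_def by simp
  moreover have "weakly_conv (\<lambda>n. b n + g) (e + g)" by (rule weakly_conv_add_tendsto[OF b_e tendsto_const])
  then have "weakly_conv (\<lambda>n. proj B ((DR A B ^^ Suc n) x)) (e + g)" unfolding b_def by simp
  then have "weakly_conv (\<lambda>n. proj B ((DR A B ^^ n) x)) (e + g)" by (rule weakly_conv_Suc)
  ultimately show ?thesis using \<open>e \<in> E\<close> by blast
qed

end

lemma dr_gap_min_norm_displacement:
  fixes A B :: "'a::{real_inner,complete_space} set"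
  assumes "closed A" "convex A" "A \<noteq> {}" "closed B" "affine B" "B \<noteq> {}"
    and "proj (closure {b - a | a b. a \<in> A \<and> b \<in> B}) 0 \<in> {b - a | a b. a \<in> A \<and> b \<in> B}"
  shows "dr_gap A B (proj (closure {b - a | a b. a \<in> A \<and> b \<in> B}) 0)"
proof -
  define S where "S = {b - a | a b. a \<in> A \<and> b \<in> B}"
  define g where "g = proj (closure S) 0"
  have "S = (\<Union>b\<in>B. \<Union>a\<in>A. {b - a})" unfolding S_def by blast
  then have "convex S" using convex_differences[OF affine_imp_convex[OF assms(5)] assms(2)] by simp
  moreover have "S \<noteq> {}" unfolding S_def using assms(3,6) by blast
  ultimately have closure_S: "closed (closure S)" "convex (closure S)" "closure S \<noteq> {}"
    by (auto intro: convex_closure)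
  have "inner g g \<le> inner g (b - a)" if "a \<in> A" "b \<in> B" for a b
  proof -
    have "b - a \<in> S" unfolding S_def using that by blast
    then have "b - a \<in> closure S" using closure_subset by blast
    then have "inner (0 - g) ((b - a) - g) \<le> 0" unfolding g_def by (rule proj_obtuse[OF closure_S])
    then show ?thesis by (simp add: inner_diff_right)
  qed
  moreover have "g \<in> S" using assms(7) unfolding g_def S_def .
  then have "\<exists>a\<in>A. a + g \<in> B" unfolding S_def by force
  ultimately have "dr_gap A B g" using assms(1,2,4,5) by unfold_locales
  then show ?thesis unfolding g_def S_def .
qed

theorem theorem2p5:
  fixes A B :: "'a::{real_inner,complete_space} set" and x :: 'a
  assumes "A \<noteq> {}" "closed A" "convex A"
    and "B \<noteq> {}" "closed B" "affine B"
    and "proj (closure {b - a | a b. a \<in> A \<and> b \<in> B}) 0 \<in> {b - a | a b. a \<in> A \<and> b \<in> B}"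
  shows "(\<exists>e \<in> A \<inter> {b - proj (closure {b - a | a b. a \<in> A \<and> b \<in> B}) 0 | b. b \<in> B}.
            weakly_conv (\<lambda>n. proj A ((DR A B ^^ n) x)) e)
       \<and> (\<exists>f \<in> {a + proj (closure {b - a | a b. a \<in> A \<and> b \<in> B}) 0 | a. a \<in> A} \<inter> B.
            weakly_conv (\<lambda>n. proj B ((DR A B ^^ n) x)) f)"
proof -
  define g where "g = proj (closure {b - a | a b. a \<in> A \<and> b \<in> B}) 0"
  interpret dr_gap A B g
    unfolding g_def using dr_gap_min_norm_displacement assms by blast
  obtain e where "e \<in> E" "weakly_conv (\<lambda>n. proj A ((DR A B ^^ n) x)) e"
    "weakly_conv (\<lambda>n. proj B ((DR A B ^^ n) x)) (e + g)"
    using DR_shadows_weakly_conv by blast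
  moreover from \<open>e \<in> E\<close> have "e \<in> A \<inter> {b - g | b. b \<in> B}" "e + g \<in> {a + g | a. a \<in> A} \<inter> B"
    unfolding E_def by force+
  ultimately show ?thesis unfolding g_def[symmetric] by blast
qed

end
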